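(* Let $R\subseteq\mathbb{R}^2$ be open and let $f:R\to\mathbb{R}^2$ be a light $C^1$ function. Let $R_1$ and $R_2$ be distinct connected components of $R\setminus f^{-1}(f(S)\cup C(f))$ with $\overline{R_1}\cap\overline{R_2}\neq\varnothing$, and suppose $f(R_1)=f(R_2)=\Omega$. If $\partial\Omega\cap\operatorname{int}\overline{\Omega}$ consists of a finite number of points, then there is no non-empty, non-degenerate connected set $\gamma\subseteq(\overline{R_1}\cap\overline{R_2}\cap R)\setminus S$ such that $R_1\cup R_2\cup\gamma$ is open.
   Context: A function is light if the preimage of each point is empty or totally disconnected. A connected set is degenerate if it consists of a single point. Write $f=(u,v)$; $J_f=u_xv_y-u_yv_x$ and $S=\{z\in R: J_f(z)=0\}$. $C(f)$ is the set of finite points $\zeta\in\mathbb{R}^2$ for which there is a sequence $(z_n)\subset R$ converging to a point of $\partial R$ or with $|z_n|\to\infty$, such that $f(z_n)\to\zeta$. *)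

theory Defs
  imports "HOL-Analysis.Analysis"
begin

definition totally_disconnected :: "'a::topological_space set \<Rightarrow> bool" where
  "totally_disconnected A \<longleftrightarrow> (\<forall>C. C \<subseteq> A \<and> connected C \<longrightarrow> (\<exists>a. C \<subseteq> {a}))"

definition light_on :: "(real^2) set \<Rightarrow> (real^2 \<Rightarrow> real^2) \<Rightarrow> bool" where
  "light_on R f \<longleftrightarrow> (\<forall>y. totally_disconnected {x \<in> R. f x = y})"

definition C1_on :: "(real^2) set \<Rightarrow> (real^2 \<Rightarrow> real^2) \<Rightarrow> bool" where
  "C1_on R f \<longleftrightarrow> (\<exists>f' :: real^2 \<Rightarrow> ((real^2) \<Rightarrow>\<^sub>L (real^2)).
      (\<forall>x\<in>R. (f has_derivative blinfun_apply (f' x)) (at x)) \<and> continuous_on R f')"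

definition jacobian :: "(real^2 \<Rightarrow> real^2) \<Rightarrow> real^2 \<Rightarrow> real" where
  "jacobian f z = det (matrix (frechet_derivative f (at z)))"

definition crit_set :: "(real^2) set \<Rightarrow> (real^2 \<Rightarrow> real^2) \<Rightarrow> (real^2) set" where
  "crit_set R f = {z \<in> R. jacobian f z = 0}"

definition cluster_set :: "(real^2) set \<Rightarrow> (real^2 \<Rightarrow> real^2) \<Rightarrow> (real^2) set" where
  "cluster_set R f = {\<zeta>. \<exists>z :: nat \<Rightarrow> real^2. (\<forall>n. z n \<in> R) \<and>
      ((\<exists>p\<in>frontier R. z \<longlonglongrightarrow> p) \<or> filterlim (\<lambda>n. norm (z n)) at_top sequentially) \<and>
      (\<lambda>n. f (z n)) \<longlonglongrightarrow> \<zeta>}"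

end

theory Submission
  imports Defs
begin

text \<open>
  The values f(S) \<union> C(f) form a closed set: a sequence of points whose images converge to a
  value outside C(f) has a subsequence converging inside R, and S is relatively closed in R.
  Hence its preimage E is relatively closed, R - E is open, and its components
  R1, R2 are open; so a point of \<gamma>, lying in both closures, lies in E. As E is a union of
  fibres of f, f(\<gamma>) misses \<Omega> = f(R1), while it lies in the closure of \<Omega> by continuity.
  Since R1 \<union> R2 \<union> \<gamma> is open and J_f does not vanish on \<gamma>, the open mapping property at
  regular points puts f(\<gamma>) into the interior of the closure of \<Omega>. Thus the connected set
  f(\<gamma>) lies in the finite set \<partial>\<Omega> \<inter> int(closure \<Omega>), so it is a point, and lightness of f makes
  \<gamma> degenerate.
\<close>

lemma unbounded_imp_subseq_norm_at_top:
  fixes w :: "nat \<Rightarrow> 'a::real_normed_vector"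
  assumes "\<not> bounded (range w)"
  shows "\<exists>r. strict_mono r \<and> filterlim (\<lambda>k. norm (w (r k))) at_top sequentially"
proof -
  have large: "\<exists>m>n. B < norm (w m)" for n :: nat and B :: real
  proof (rule ccontr)
    assume "\<not> ?thesis"
    then have "range w \<subseteq> w ` {..n} \<union> cball 0 B"
      by (auto simp: not_less)
    then have "bounded (range w)"
      by (meson bounded_Un bounded_cball bounded_subset finite_atMost finite_imageI finite_imp_bounded)
    with assms show False ..
  qed
  obtain r where r: "\<And>k. real k < norm (w (r k)) \<and> r k < r (Suc k)"
    using dependent_nat_choice[of "\<lambda>k m. real k < norm (w m)" "\<lambda>_ m m'. m < m'"] large by metis
  have "strict_mono r"
    using r by (intro strict_monoI_Suc) blast
  moreover have "filterlim (\<lambda>k. norm (w (r k))) at_top sequentially"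
    using r by (intro filterlim_at_top_mono[OF filterlim_real_sequentially] always_eventually allI)
      (simp add: less_imp_le)
  ultimately show ?thesis by blast
qed

lemma components_open_closure_disjoint:
  fixes U :: "'a::real_normed_vector set"
  assumes "open U" and "A \<in> components U" and "B \<in> components U" and "A \<noteq> B"
  shows "closure A \<inter> closure B \<inter> U = {}"
proof (rule equals0I)
  have meets: "C = A" if "C \<in> components U" "z \<in> C" "z \<in> closure A" "A \<in> components U" for A C z
  proof -
    have "C \<inter> A \<noteq> {}"
      using that open_components[OF \<open>open U\<close>] open_Int_closure_eq_empty by blast
    then show ?thesis using components_nonoverlap that by blast
  qed
  fix z assume z: "z \<in> closure A \<inter> closure B \<inter> U"
  then obtain C where "C \<in> components U" "z \<in> C"
    using Union_components[of U] by blast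
  then have "C = A" "C = B"
    using meets z assms(2,3) by blast+
  with \<open>A \<noteq> B\<close> show False by simp
qed

lemma image_closure_Int_closure_disjoint_image_component:
  fixes R :: "'a::real_normed_vector set" and f :: "'a \<Rightarrow> 'b" and K :: "'b set"
  defines "E \<equiv> {x \<in> R. f x \<in> K}"
  assumes "open (R - E)" and "A \<in> components (R - E)" and "B \<in> components (R - E)"
    and "A \<noteq> B"
  shows "f ` (closure A \<inter> closure B \<inter> R) \<inter> f ` A = {}"
proof -
  have "closure A \<inter> closure B \<inter> (R - E) = {}"
    using assms(2-5) by (rule components_open_closure_disjoint)
  then have "f ` (closure A \<inter> closure B \<inter> R) \<subseteq> f ` E"
    by (intro image_mono) blast
  moreover have "f ` A \<subseteq> f ` (R - E)"
    using assms(3) in_components_subset by blast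
  moreover have "f ` E \<inter> f ` (R - E) = {}"
    unfolding E_def by auto
  ultimately show ?thesis
    by blast
qed

lemma image_closure_Int_subset_closure_image:
  assumes "continuous_on R f" and "open R"
  shows "f ` (closure A \<inter> R) \<subseteq> closure (f ` A)"
proof -
  have "f ` (R \<inter> closure (A \<inter> R)) \<subseteq> closure (f ` (A \<inter> R))"
    using continuous_map_image_closure_subset[of "top_of_set R" euclidean f "A \<inter> R"] assms(1)
    by (simp add: closure_of_subtopology_open)
  moreover have "closure A \<inter> R \<subseteq> R \<inter> closure (A \<inter> R)"
    using open_Int_closure_subset[OF assms(2), of A] by (auto simp: Int_commute)
  ultimately show ?thesis
    by (meson closure_mono dual_order.trans image_mono inf_le1)
qed

lemma light_on_connected_finite_image_imp_sing:
  assumes "light_on R f" and "continuous_on R f" and "connected \<gamma>" and "\<gamma> \<subseteq> R"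
    and "finite (f ` \<gamma>)"
  obtains a where "\<gamma> \<subseteq> {a}"
proof -
  have "connected (f ` \<gamma>)"
    using connected_continuous_image continuous_on_subset assms(2-4) by blast
  then obtain b where "f ` \<gamma> \<subseteq> {b}"
    using connected_finite_iff_sing assms(5) by (metis empty_subsetI order_refl)
  then have "\<gamma> \<subseteq> {x \<in> R. f x = b}"
    using assms(4) by auto
  then show ?thesis
    using assms(1,3) that unfolding light_on_def totally_disconnected_def by blast
qed

lemma C1_on_imp_differentiable:
  "C1_on R f \<Longrightarrow> x \<in> R \<Longrightarrow> f differentiable (at x)"
  unfolding C1_on_def differentiable_def by blast

lemma C1_on_imp_continuous_on: "C1_on R f \<Longrightarrow> continuous_on R f"
  by (meson C1_on_imp_differentiable continuous_at_imp_continuous_on differentiable_imp_continuous_within)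

lemma continuous_on_jacobian:
  assumes "C1_on R f"
  shows "continuous_on R (jacobian f)"
proof -
  obtain f' :: "real^2 \<Rightarrow> ((real^2) \<Rightarrow>\<^sub>L (real^2))" where
    der: "\<And>x. x \<in> R \<Longrightarrow> (f has_derivative blinfun_apply (f' x)) (at x)" and "continuous_on R f'"
    using assms unfolding C1_on_def by blast
  then have entries: "continuous_on R (\<lambda>z. blinfun_apply (f' z) v $ i)" for v i
    by (intro continuous_intros)
  then have "continuous_on R (\<lambda>z. det (matrix (blinfun_apply (f' z))))"
    unfolding det_2 matrix_def by (simp add: entries continuous_on_mult continuous_on_diff)
  moreover have "jacobian f z = det (matrix (blinfun_apply (f' z)))" if "z \<in> R" for z
    unfolding jacobian_def using frechet_derivative_at[OF der[OF that]] by simp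
  ultimately show ?thesis
    using continuous_on_cong by force
qed

lemma closedin_crit_set: "C1_on R f \<Longrightarrow> closedin (top_of_set R) (crit_set R f)"
  unfolding crit_set_def by (rule continuous_closedin_preimage_constant[OF continuous_on_jacobian])

lemma nonzero_jacobian_imp_interior_image:
  fixes f :: "real^2 \<Rightarrow> real^2"
  assumes "open R" and "continuous_on R f" and "U \<subseteq> R" and z: "z \<in> interior U"
    and "f differentiable (at z)" and "jacobian f z \<noteq> 0"
  shows "f z \<in> interior (f ` U)"
proof -
  define f' where "f' = frechet_derivative f (at z)"
  have der: "(f has_derivative f') (at z)"
    using assms(5) frechet_derivative_works f'_def by blast
  have lin: "linear f'"
    using der has_derivative_linear by blast
  have "inj f'"
    using assms(6) det_nz_iff_inj[OF lin] unfolding jacobian_def f'_def by simp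
  then obtain g' where "linear g'" "f' \<circ> g' = id"
    using linear_injective_isomorphism[OF lin] by (auto simp: fun_eq_iff)
  moreover have "z \<in> R"
    using assms(3) z interior_subset by blast
  ultimately show ?thesis
    using sussmann_open_mapping[OF assms(1,2) _ der] linear_conv_bounded_linear assms(3) z by blast
qed

lemma image_noncritical_subset_interior_image:
  assumes "open R" and "C1_on R f" and "open U" and "U \<subseteq> R"
  shows "f ` (U - crit_set R f) \<subseteq> interior (f ` U)"
proof
  fix y assume "y \<in> f ` (U - crit_set R f)"
  then obtain z where "z \<in> U" "z \<notin> crit_set R f" "y = f z"
    by blast
  then show "y \<in> interior (f ` U)"
    using nonzero_jacobian_imp_interior_image[OF assms(1) C1_on_imp_continuous_on[OF assms(2)] assms(4)]
      C1_on_imp_differentiable[OF assms(2)] assms(3,4)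
    by (auto simp: interior_open crit_set_def)
qed

lemma limit_notin_cluster_set_imp_convergent_subsequence:
  fixes R :: "(real^2) set" and f :: "real^2 \<Rightarrow> real^2" and w :: "nat \<Rightarrow> real^2"
  assumes "open R" and wR: "\<And>n. w n \<in> R" and lim: "(\<lambda>n. f (w n)) \<longlonglongrightarrow> \<zeta>"
    and notin: "\<zeta> \<notin> cluster_set R f"
  obtains p r where "p \<in> R" "strict_mono r" "(w \<circ> r) \<longlonglongrightarrow> p"
proof -
  have escaping: "\<zeta> \<in> cluster_set R f"
    if "strict_mono r" and "(\<exists>p\<in>frontier R. (w \<circ> r) \<longlonglongrightarrow> p)
        \<or> filterlim (\<lambda>k. norm (w (r k))) at_top sequentially" for r
  proof -
    have "(\<lambda>k. f (w (r k))) \<longlonglongrightarrow> \<zeta>"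
      using LIMSEQ_subseq_LIMSEQ[OF lim that(1)] by (simp add: o_def)
    then show ?thesis
      unfolding cluster_set_def using that(2) wR by (intro CollectI exI[of _ "w \<circ> r"]) auto
  qed
  show ?thesis
  proof (cases "bounded (range w)")
    case True
    then obtain p r where r: "strict_mono r" "(w \<circ> r) \<longlonglongrightarrow> p"
      using bounded_imp_convergent_subsequence by blast
    have "p \<in> closure R"
      using r(2) wR by (metis closure_sequential comp_apply)
    moreover have "p \<notin> frontier R"
      using escaping r notin by blast
    ultimately have "p \<in> R"
      using \<open>open R\<close> by (simp add: frontier_def interior_open)
    with r that show ?thesis by blast
  next
    case False
    then show ?thesis
      using unbounded_imp_subseq_norm_at_top escaping notin by blast
  qed
qed

lemma closure_cluster_set_approachable:
  fixes R :: "(real^2) set" and f :: "real^2 \<Rightarrow> real^2"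
  assumes "y \<in> closure (cluster_set R f)" and "e > 0"
  shows "\<exists>w\<in>R. dist (f w) y < e \<and> ((\<exists>p\<in>frontier R. dist w p < e) \<or> B < norm w)"
proof -
  obtain \<eta> where "\<eta> \<in> cluster_set R f" and \<eta>y: "dist \<eta> y < e/2"
    using assms closure_approachable half_gt_zero by blast
  then obtain z where zR: "\<And>n. z n \<in> R"
    and escape: "(\<exists>p\<in>frontier R. z \<longlonglongrightarrow> p) \<or> filterlim (\<lambda>n. norm (z n)) at_top sequentially"
    and lim: "(\<lambda>n. f (z n)) \<longlonglongrightarrow> \<eta>"
    unfolding cluster_set_def by blast
  have "eventually (\<lambda>n. dist (f (z n)) \<eta> < e/2) sequentially"
    using lim assms(2) by (intro tendstoD) auto
  moreover have "eventually (\<lambda>n. (\<exists>p\<in>frontier R. dist (z n) p < e) \<or> B < norm (z n)) sequentially"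
    using escape
  proof
    assume "\<exists>p\<in>frontier R. z \<longlonglongrightarrow> p"
    then obtain p where "p \<in> frontier R" "z \<longlonglongrightarrow> p" by blast
    then show ?thesis
      using tendstoD[OF \<open>z \<longlonglongrightarrow> p\<close> \<open>e > 0\<close>] by (auto elim: eventually_mono)
  next
    assume "filterlim (\<lambda>n. norm (z n)) at_top sequentially"
    then show ?thesis
      by (auto simp: filterlim_at_top_dense elim: eventually_mono)
  qed
  ultimately obtain n where "dist (f (z n)) \<eta> < e/2"
    and "(\<exists>p\<in>frontier R. dist (z n) p < e) \<or> B < norm (z n)"
    using eventually_happens'[OF sequentially_bot eventually_conj] by blast
  moreover have "dist (f (z n)) y < e"
    using calculation(1) \<eta>y dist_triangle_less_add[of "f (z n)" \<eta> "e/2" y "e/2"]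
    by (simp add: dist_commute)
  ultimately show ?thesis
    using zR by blast
qed

lemma closed_cluster_set:
  fixes R :: "(real^2) set" and f :: "real^2 \<Rightarrow> real^2"
  assumes "open R"
  shows "closed (cluster_set R f)"
  unfolding closure_subset_eq[symmetric]
proof
  fix y assume y: "y \<in> closure (cluster_set R f)"
  show "y \<in> cluster_set R f"
  proof (rule ccontr)
    assume notin: "y \<notin> cluster_set R f"
    have "\<forall>n. \<exists>w. w \<in> R \<and> dist (f w) y < 1 / real (Suc n)
        \<and> ((\<exists>q\<in>frontier R. dist w q < 1 / real (Suc n)) \<or> real n < norm w)"
    proof
      fix n
      show "\<exists>w. w \<in> R \<and> dist (f w) y < 1 / real (Suc n)
          \<and> ((\<exists>q\<in>frontier R. dist w q < 1 / real (Suc n)) \<or> real n < norm w)"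
        using closure_cluster_set_approachable[OF y, of "1 / real (Suc n)" "real n"] by auto
    qed
    from choice[OF this] obtain w where "\<forall>n. w n \<in> R \<and> dist (f (w n)) y < 1 / real (Suc n)
        \<and> ((\<exists>q\<in>frontier R. dist (w n) q < 1 / real (Suc n)) \<or> real n < norm (w n))"
      by blast
    then have wR: "\<And>n. w n \<in> R" and wy: "\<And>n. dist (f (w n)) y < 1 / real (Suc n)"
      and escape: "\<And>n. (\<exists>q\<in>frontier R. dist (w n) q < 1 / real (Suc n)) \<or> real n < norm (w n)"
      by simp_all
    have "(\<lambda>n. dist (f (w n)) y) \<longlonglongrightarrow> 0"
      by (rule LIMSEQ_norm_0) (use wy in simp)
    then have "(\<lambda>n. f (w n)) \<longlonglongrightarrow> y"
      by (rule tendsto_dist_iff[THEN iffD2])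
    then obtain p r where "p \<in> R" and r: "strict_mono r" "(w \<circ> r) \<longlonglongrightarrow> p"
      using limit_notin_cluster_set_imp_convergent_subsequence[where w = w, OF assms wR _ notin] by blast
    then obtain e where "e > 0" and e: "ball p e \<subseteq> R"
      using assms openE by blast
    have "eventually (\<lambda>n. 1 / real (Suc n) < e/2 \<and> norm p + e < real n) sequentially"
    proof (intro eventually_conj)
      have "(\<lambda>n. 1 / real (Suc n)) \<longlonglongrightarrow> 0"
        using LIMSEQ_inverse_real_of_nat by (simp add: inverse_eq_divide)
      then show "eventually (\<lambda>n. 1 / real (Suc n) < e/2) sequentially"
        using \<open>e > 0\<close> by (intro order_tendstoD(2)) auto
      show "eventually (\<lambda>n. norm p + e < real n) sequentially"
        using filterlim_real_sequentially by (simp add: filterlim_at_top_dense)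
    qed
    then have "eventually (\<lambda>k. 1 / real (Suc (r k)) < e/2 \<and> norm p + e < real (r k)) sequentially"
      using eventually_compose_filterlim filterlim_subseq[OF r(1)] by blast
    moreover have "eventually (\<lambda>k. dist (w (r k)) p < e/2) sequentially"
      using r(2) \<open>e > 0\<close> by (intro tendstoD) (auto simp: o_def)
    ultimately have "eventually (\<lambda>k. False) sequentially"
    proof eventually_elim
      case (elim k)
      then have small: "1 / real (Suc (r k)) < e/2" and large: "norm p + e < real (r k)"
        and near: "dist (w (r k)) p < e/2"
        by simp_all
      have "\<not> (\<exists>q\<in>frontier R. dist (w (r k)) q < 1 / real (Suc (r k)))"
      proof
        assume "\<exists>q\<in>frontier R. dist (w (r k)) q < 1 / real (Suc (r k))"
        then obtain q where q: "q \<in> frontier R" "dist (w (r k)) q < 1 / real (Suc (r k))"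
          by blast
        then have "dist p q < e"
          using small near dist_triangle[of p q "w (r k)"] dist_commute[of p "w (r k)"] by linarith
        then have "q \<in> R"
          using e by auto
        then show False
          using q(1) frontier_disjoint_eq[of R] assms by blast
      qed
      moreover have "norm (w (r k)) < real (r k)"
        using large near \<open>e > 0\<close> norm_triangle_sub[of "w (r k)" p] unfolding dist_norm by linarith
      ultimately show False
        using escape[of "r k"] by linarith
    qed
    then show False by simp
  qed
qed

lemma closure_image_subset_Un_cluster_set:
  fixes R S :: "(real^2) set" and f :: "real^2 \<Rightarrow> real^2"
  assumes "open R" and contf: "continuous_on R f" and S: "closedin (top_of_set R) S"
  shows "closure (f ` S) \<subseteq> f ` S \<union> cluster_set R f"
proof
  fix y assume "y \<in> closure (f ` S)"
  from closure_sequential[THEN iffD1, OF this] obtain x where xS: "\<forall>n. x n \<in> f ` S"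
    and "x \<longlonglongrightarrow> y"
    by blast
  have "\<forall>n. \<exists>t. t \<in> S \<and> f t = x n"
    using xS by (metis imageE)
  from choice[OF this] obtain s where "\<forall>n. s n \<in> S \<and> f (s n) = x n"
    by blast
  then have sS: "\<And>n. s n \<in> S" and lim: "(\<lambda>n. f (s n)) \<longlonglongrightarrow> y"
    using \<open>x \<longlonglongrightarrow> y\<close> by auto
  show "y \<in> f ` S \<union> cluster_set R f"
  proof (cases "y \<in> cluster_set R f")
    case False
    obtain T where "closed T" and ST: "S = R \<inter> T"
      using S closedin_closed by blast
    then have "\<And>n. s n \<in> R"
      using sS by blast
    then obtain p r where "p \<in> R" and r: "strict_mono r" "(s \<circ> r) \<longlonglongrightarrow> p"
      using limit_notin_cluster_set_imp_convergent_subsequence[where w = s, OF assms(1) _ lim False]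
      by blast
    have "p \<in> S"
      using closed_sequentially[OF \<open>closed T\<close> _ r(2)] sS ST \<open>p \<in> R\<close> by auto
    have "(\<lambda>k. f (s (r k))) \<longlonglongrightarrow> f p"
      using continuous_on_tendsto_compose[OF contf r(2) \<open>p \<in> R\<close>] sS ST by (simp add: o_def)
    moreover have "(\<lambda>k. f (s (r k))) \<longlonglongrightarrow> y"
      using LIMSEQ_subseq_LIMSEQ[OF lim r(1)] by (simp add: o_def)
    ultimately have "y = f p"
      using LIMSEQ_unique by blast
    with \<open>p \<in> S\<close> show ?thesis by blast
  qed simp
qed

lemma closed_crit_values_Un_cluster_set:
  assumes "open R" and "C1_on R f"
  shows "closed (f ` crit_set R f \<union> cluster_set R f)"
  unfolding closure_subset_eq[symmetric] closure_Un
  using closure_image_subset_Un_cluster_set[OF assms(1) C1_on_imp_continuous_on closedin_crit_set]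
    closed_cluster_set[OF assms(1)] assms(2) by auto

lemma open_diff_preimage_crit_values_cluster_set:
  assumes "open R" and "C1_on R f"
  shows "open (R - {x \<in> R. f x \<in> f ` crit_set R f \<union> cluster_set R f})"
proof -
  have "R - {x \<in> R. f x \<in> f ` crit_set R f \<union> cluster_set R f}
      = R \<inter> f -` (- (f ` crit_set R f \<union> cluster_set R f))"
    by auto
  then show ?thesis
    using continuous_open_preimage[OF C1_on_imp_continuous_on[OF assms(2)] assms(1)
        open_Compl[OF closed_crit_values_Un_cluster_set[OF assms]]]
    by (simp only:)
qed

theorem lemma3p16:
  fixes R :: "(real^2) set" and f :: "real^2 \<Rightarrow> real^2"
    and R1 R2 \<Omega> :: "(real^2) set"
  assumes "open R" and "light_on R f" and "C1_on R f"
    and "R1 \<in> components (R - {x \<in> R. f x \<in> f ` crit_set R f \<union> cluster_set R f})"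
    and "R2 \<in> components (R - {x \<in> R. f x \<in> f ` crit_set R f \<union> cluster_set R f})"
    and "R1 \<noteq> R2"
    and "closure R1 \<inter> closure R2 \<noteq> {}"
    and "f ` R1 = \<Omega>" and "f ` R2 = \<Omega>"
    and "finite (frontier \<Omega> \<inter> interior (closure \<Omega>))"
  shows "\<not> (\<exists>\<gamma>. \<gamma> \<noteq> {} \<and> connected \<gamma> \<and> \<not> (\<exists>a. \<gamma> = {a}) \<and>
            \<gamma> \<subseteq> (closure R1 \<inter> closure R2 \<inter> R) - crit_set R f \<and>
            open (R1 \<union> R2 \<union> \<gamma>))"
proof
  assume "\<exists>\<gamma>. \<gamma> \<noteq> {} \<and> connected \<gamma> \<and> \<not> (\<exists>a. \<gamma> = {a}) \<and>
            \<gamma> \<subseteq> (closure R1 \<inter> closure R2 \<inter> R) - crit_set R f \<and>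
            open (R1 \<union> R2 \<union> \<gamma>)"
  then obtain \<gamma> where "\<gamma> \<noteq> {}" "connected \<gamma>" "\<not> (\<exists>a. \<gamma> = {a})"
    and \<gamma>: "\<gamma> \<subseteq> (closure R1 \<inter> closure R2 \<inter> R) - crit_set R f"
    and "open (R1 \<union> R2 \<union> \<gamma>)" by blast
  have contf: "continuous_on R f"
    using assms(3) by (rule C1_on_imp_continuous_on)
  have "f ` \<gamma> \<inter> \<Omega> = {}"
    using image_closure_Int_closure_disjoint_image_component[OF
        open_diff_preimage_crit_values_cluster_set[OF assms(1,3)] assms(4-6)] \<gamma> assms(8)
    by blast
  moreover have "f ` \<gamma> \<subseteq> closure \<Omega>"
    using image_closure_Int_subset_closure_image[OF contf assms(1), of R1] \<gamma> assms(8) by blast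
  moreover have "f ` \<gamma> \<subseteq> interior (closure \<Omega>)"
  proof -
    have "R1 \<union> R2 \<union> \<gamma> \<subseteq> R"
      using assms(4,5) in_components_subset \<gamma> by blast
    then have "f ` \<gamma> \<subseteq> interior (f ` (R1 \<union> R2 \<union> \<gamma>))"
      using image_noncritical_subset_interior_image[OF assms(1,3) \<open>open (R1 \<union> R2 \<union> \<gamma>)\<close>] \<gamma>
      by blast
    moreover have "f ` (R1 \<union> R2 \<union> \<gamma>) \<subseteq> closure \<Omega>"
      using \<open>f ` \<gamma> \<subseteq> closure \<Omega>\<close> assms(8,9) closure_subset by blast
    ultimately show ?thesis
      using interior_mono by blast
  qed
  ultimately have "f ` \<gamma> \<subseteq> frontier \<Omega> \<inter> interior (closure \<Omega>)"
    using interior_subset unfolding frontier_def by blast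
  then have "finite (f ` \<gamma>)"
    using assms(10) finite_subset by blast
  then obtain a where "\<gamma> \<subseteq> {a}"
    using light_on_connected_finite_image_imp_sing[OF assms(2) contf \<open>connected \<gamma>\<close>] \<gamma> by blast
  then show False
    using \<open>\<gamma> \<noteq> {}\<close> \<open>\<not> (\<exists>a. \<gamma> = {a})\<close> by blast
qed

end
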